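(* Let $G_{ij}$ ($0\le i\le m$, $0\le j\le n$) be an $m\times n$ net in the plane $\mathbb R^2$, let $0\le i_0\le m$, $0\le j_0\le n$, and let points $F_{ij_0}\in I^3$ ($0\le i\le m$) and $F_{i_0j}\in I^3$ ($0\le j\le n$) be given with top views $\overline{F_{ij_0}}=G_{ij_0}$ and $\overline{F_{i_0j}}=G_{i_0j}$. Then there exists a unique $m\times n$ net $F_{ij}$ ($0\le i\le m$, $0\le j\le n$) in $I^3$ having these two parameter lines and top view $\overline{F_{ij}}=G_{ij}$ for all $i,j$.
   Context: $I^3$ is $\mathbb{R}^3$ with coordinates $(x,y,z)$; the top view of $(x,y,z)$ is $(x,y)$. An $m\times n$ net (in $\mathbb R^3$ or $\mathbb R^2$) is a collection of points $F_{ij}$, $0\le i\le m,0\le j\le n$, such that $F_{ij},F_{i+1,j},F_{i+1,j+1},F_{i,j+1}$ are consecutive vertices of a convex planar quadrilateral for all $0\le i<m,0\le j<n$. Its parameter lines are the broken lines $F_{i0}\dots F_{in}$ and $F_{0j}\dots F_{mj}$; the data above are the parameter lines $F_{0j_0}\dots F_{mj_0}$ and $F_{i_00}\dots F_{i_0n}$. *)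

theory Defs
  imports "HOL-Analysis.Analysis"
begin

text \<open>Points of isotropic space I^3 = R^3 with coordinates (x,y,z); the plane R^2.\<close>
type_synonym point3 = "real \<times> real \<times> real"
type_synonym point2 = "real \<times> real"

definition top_view :: "point3 \<Rightarrow> point2" where
  "top_view p = (fst p, fst (snd p))"

definition convex_quad :: "'a::euclidean_space \<Rightarrow> 'a \<Rightarrow> 'a \<Rightarrow> 'a \<Rightarrow> bool" where
  "convex_quad a b c d \<longleftrightarrow>
     coplanar {a, b, c, d} \<and> \<not> collinear {a, b, c, d} \<and>
     open_segment a c \<inter> open_segment b d \<noteq> {}"

definition is_net :: "nat \<Rightarrow> nat \<Rightarrow> (nat \<Rightarrow> nat \<Rightarrow> 'a::euclidean_space) \<Rightarrow> bool" where
  "is_net m n F \<longleftrightarrow>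
     (\<forall>i<m. \<forall>j<n. convex_quad (F i j) (F (Suc i) j) (F (Suc i) (Suc j)) (F i (Suc j)))"

end

theory Submission
  imports Defs
begin

text \<open>If the top view of a quadrilateral of \<open>I\<^sup>3\<close> is a convex quadrilateral, then the
  quadrilateral itself is convex and planar exactly when its fourth vertex lies in the plane of
  the other three. The top views of those three are not collinear, so this plane is not vertical
  and the top view maps it bijectively onto \<open>\<real>\<^sup>2\<close>: the fourth vertex is the unique
  point of the plane above the prescribed point of \<open>G\<close>. Hence every vertex off the two given
  parameter lines is determined by the three vertices of its cell nearer to \<open>(i0, j0)\<close>, and
  induction on \<open>|i - i0| + |j - j0|\<close> gives both existence and uniqueness of the net.\<close>

lemma linear_top_view: "linear top_view"
  by (rule linearI) (auto simp: top_view_def)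

lemma top_view_affine_hull: "top_view ` (affine hull S) = affine hull (top_view ` S)"
  using affine_hull_linear_image linear_conv_bounded_linear linear_top_view by blast

lemma collinear_linear_image:
  fixes f :: "'a::euclidean_space \<Rightarrow> 'b::euclidean_space"
  assumes "linear f" and "collinear S"
  shows "collinear (f ` S)"
proof -
  obtain u v where "S \<subseteq> affine hull {u, v}"
    using assms(2) by (auto simp: collinear_affine_hull)
  then have "f ` S \<subseteq> f ` (affine hull {u, v})"
    by (rule image_mono)
  also have "\<dots> = affine hull {f u, f v}"
    using affine_hull_linear_image[of f "{u, v}"] assms(1) linear_conv_bounded_linear by auto
  finally show ?thesis
    unfolding collinear_affine_hull by blast
qed

lemma not_collinear_lincomb_eq_0:
  fixes x y z :: "'a::real_vector"
  assumes "\<not> collinear {x, y, z}" and "s *\<^sub>R (y - x) + t *\<^sub>R (z - x) = 0"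
  shows "s = 0 \<and> t = 0"
proof (cases "s = 0")
  case False
  have "s *\<^sub>R y = s *\<^sub>R ((1 + t / s) *\<^sub>R x + (1 - (1 + t / s)) *\<^sub>R z)"
    using assms(2) False by (simp add: algebra_simps)
  then have "y = (1 + t / s) *\<^sub>R x + (1 - (1 + t / s)) *\<^sub>R z"
    using False by simp
  then show ?thesis
    using assms(1) collinear_3_expand by blast
next
  case True
  then show ?thesis
    using assms by (auto simp: insert_commute)
qed

lemma collinear_crossing_segments:
  fixes p q r s :: "'a::euclidean_space"
  assumes "x \<in> open_segment p q" and "x \<in> open_segment r s" and "collinear {p, q, r}"
  shows "collinear {p, q, r, s}"
proof -
  have "p \<noteq> q" "r \<noteq> x"
    using assms by (auto simp: open_segment_def)
  have "collinear {p, q, x}" "collinear {r, x, s}"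
    using assms(1,2) collinear_subset[OF collinear_closed_segment] open_closed_segment
      ends_in_segment by (smt (verit) empty_subsetI insert_subset)+
  then have "collinear {r, x, p}" "collinear {r, x, q}"
    using collinear_4_3[OF \<open>p \<noteq> q\<close>, of r x] assms(3) collinear_subset
    by (metis insert_commute subset_insertI)+
  then have "collinear {r, x, p, q, s}"
    using \<open>collinear {r, x, s}\<close> collinear_triples[OF \<open>r \<noteq> x\<close>, of "{p, q, s}"] by auto
  then show ?thesis
    by (rule collinear_subset) auto
qed

lemma affine_hull_not_collinear_3_eq_UNIV:
  fixes a b c :: point2
  assumes "\<not> collinear {a, b, c}"
  shows "affine hull {a, b, c} = UNIV"
proof -
  have "aff_dim {a, b, c} = int DIM(point2)"
    using assms aff_dim_le_DIM[of "{a, b, c}"] by (simp add: collinear_aff_dim)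
  then show ?thesis
    using aff_dim_eq_full by blast
qed

lemma bij_betw_top_view_affine_hull:
  assumes nc: "\<not> collinear (top_view ` {X, Y, Z})"
  shows "bij_betw top_view (affine hull {X, Y, Z}) UNIV"
proof (rule bij_betw_imageI)
  show "top_view ` (affine hull {X, Y, Z}) = UNIV"
    using nc affine_hull_not_collinear_3_eq_UNIV by (simp add: top_view_affine_hull)
  show "inj_on top_view (affine hull {X, Y, Z})"
  proof (rule inj_onI)
    fix P P' assume "P \<in> affine hull {X, Y, Z}" "P' \<in> affine hull {X, Y, Z}"
      and eq: "top_view P = top_view P'"
    then obtain u v w u' v' w' where
      P: "P = u *\<^sub>R X + v *\<^sub>R Y + w *\<^sub>R Z" "u + v + w = 1" and
      P': "P' = u' *\<^sub>R X + v' *\<^sub>R Y + w' *\<^sub>R Z" "u' + v' + w' = 1"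
      by (auto simp: affine_hull_3)
    have diff: "P - P' = (v - v') *\<^sub>R (Y - X) + (w - w') *\<^sub>R (Z - X)"
      using P P' by (simp add: algebra_simps eq_diff_eq' flip: scaleR_left_distrib)
    have "(v - v') *\<^sub>R (top_view Y - top_view X) + (w - w') *\<^sub>R (top_view Z - top_view X) = 0"
      using eq arg_cong[OF diff, of top_view] linear_top_view
      by (simp add: linear_diff linear_add linear_scale)
    then have "v = v' \<and> w = w'"
      using not_collinear_lincomb_eq_0 nc by fastforce
    then show "P = P'"
      using diff by simp
  qed
qed

text \<open>The point of the plane through \<open>S\<close> lying above \<open>q\<close>; an unspecified point unless the
  top views of \<open>S\<close> span \<open>\<real>\<^sup>2\<close> affinely.\<close>

definition plane_lift :: "point3 set \<Rightarrow> point2 \<Rightarrow> point3" where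
  "plane_lift S q = the_inv_into (affine hull S) top_view q"

lemma
  assumes "\<not> collinear (top_view ` {X, Y, Z})"
  shows plane_lift_in_affine_hull: "plane_lift {X, Y, Z} q \<in> affine hull {X, Y, Z}"
    and top_view_plane_lift: "top_view (plane_lift {X, Y, Z} q) = q"
  using bij_betw_top_view_affine_hull[OF assms]
  unfolding plane_lift_def bij_betw_def
  by (auto intro: the_inv_into_into f_the_inv_into_f)

lemma plane_lift_top_view:
  assumes "\<not> collinear (top_view ` {X, Y, Z})" and "P \<in> affine hull {X, Y, Z}"
  shows "plane_lift {X, Y, Z} (top_view P) = P"
  using bij_betw_top_view_affine_hull[OF assms(1)] assms(2)
  unfolding plane_lift_def bij_betw_def by (simp add: the_inv_into_f_f)

lemma coplanar_imp_in_affine_hull: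
  fixes X Y Z W :: "'a::euclidean_space"
  assumes "\<not> collinear {X, Y, Z}" and "coplanar {X, Y, Z, W}"
  shows "W \<in> affine hull {X, Y, Z}"
proof -
  obtain u v w where uvw: "{X, Y, Z, W} \<subseteq> affine hull {u, v, w}"
    using assms(2) by (auto simp: coplanar_def)
  have "card {u, v, w} \<le> 3"
    by (auto simp: card_insert_if)
  then have "aff_dim {u, v, w} \<le> 2"
    using aff_dim_le_card[of "{u, v, w}"] by simp
  moreover have "aff_dim {X, Y, Z} \<ge> 2"
    using assms(1) by (simp add: collinear_aff_dim)
  moreover have "{X, Y, Z} \<subseteq> affine hull {u, v, w}"
    using uvw by auto
  ultimately have "affine hull {X, Y, Z} = affine hull {u, v, w}"
    using aff_dim_eq_full_gen[of "{X, Y, Z}" "affine hull {u, v, w}"]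
      aff_dim_subset[of "{X, Y, Z}" "affine hull {u, v, w}"] by simp
  then show ?thesis
    using uvw by auto
qed

lemma convex_quad_not_collinear:
  fixes a b c d :: "'a::euclidean_space"
  assumes "convex_quad a b c d"
  shows "\<not> collinear {a, b, d}"
proof
  assume "collinear {a, b, d}"
  then have "collinear {b, d, a}"
    by (simp add: insert_commute)
  moreover obtain x where "x \<in> open_segment b d" "x \<in> open_segment a c"
    using assms by (auto simp: convex_quad_def)
  ultimately have "collinear {b, d, a, c}"
    using collinear_crossing_segments by blast
  then show False
    using assms by (simp add: convex_quad_def insert_commute)
qed

lemma open_segment_subset_linear_image:
  assumes "linear f"
  shows "open_segment (f a) (f b) \<subseteq> f ` open_segment a b"
  using closed_segment_linear_image[OF assms] by (force simp: open_segment_def)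

lemma open_segment_subset_affine_hull:
  assumes "a \<in> affine hull S" and "b \<in> affine hull S"
  shows "open_segment a b \<subseteq> affine hull S"
  using closed_segment_subset[OF assms] affine_imp_convex[OF affine_affine_hull]
    open_closed_segment by blast

lemma convex_quad_if_in_affine_hull:
  fixes P1 P2 P3 P4 :: point3
  assumes quad: "convex_quad (top_view P1) (top_view P2) (top_view P3) (top_view P4)"
    and "P3 \<in> affine hull {P1, P2, P4}"
  shows "convex_quad P1 P2 P3 P4"
proof -
  let ?H = "affine hull {P1, P2, P4}"
  have nc: "\<not> collinear (top_view ` {P1, P2, P4})"
    using convex_quad_not_collinear[OF quad] by simp
  have H: "{P1, P2, P3, P4} \<subseteq> ?H"
    using assms(2) by (simp add: hull_inc)
  then have "coplanar {P1, P2, P3, P4}"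
    unfolding coplanar_def by blast
  moreover have "\<not> collinear {P1, P2, P3, P4}"
    using quad collinear_linear_image[OF linear_top_view] by (fastforce simp: convex_quad_def)
  moreover obtain x where x: "x \<in> open_segment (top_view P1) (top_view P3)"
      "x \<in> open_segment (top_view P2) (top_view P4)"
    using quad by (auto simp: convex_quad_def)
  obtain X1 where X1: "X1 \<in> open_segment P1 P3" "top_view X1 = x"
    using x(1) open_segment_subset_linear_image[OF linear_top_view, of P1 P3] by auto
  obtain X2 where X2: "X2 \<in> open_segment P2 P4" "top_view X2 = x"
    using x(2) open_segment_subset_linear_image[OF linear_top_view, of P2 P4] by auto
  have "X1 \<in> ?H" "X2 \<in> ?H"
    using X1(1) X2(1) H open_segment_subset_affine_hull by blast+
  then have "X1 = X2"
    using plane_lift_top_view[OF nc] X1(2) X2(2) by metis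
  ultimately show ?thesis
    using X1(1) X2(1) by (auto simp: convex_quad_def)
qed

lemma convex_quad_iff_plane_lift:
  fixes P1 P2 P3 P4 :: point3
  assumes quad: "convex_quad (top_view P1) (top_view P2) (top_view P3) (top_view P4)"
  shows "convex_quad P1 P2 P3 P4 \<longleftrightarrow> P3 = plane_lift {P1, P2, P4} (top_view P3)"
proof -
  have nc: "\<not> collinear (top_view ` {P1, P2, P4})"
    using convex_quad_not_collinear[OF quad] by simp
  then have "\<not> collinear {P1, P2, P4}"
    using collinear_linear_image[OF linear_top_view] by blast
  have "convex_quad P1 P2 P3 P4 \<Longrightarrow> P3 \<in> affine hull {P1, P2, P4}"
    using coplanar_imp_in_affine_hull[OF \<open>\<not> collinear {P1, P2, P4}\<close>]
    by (simp add: convex_quad_def insert_commute)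
  then show ?thesis
    using convex_quad_if_in_affine_hull[OF quad] plane_lift_top_view[OF nc]
      plane_lift_in_affine_hull[OF nc] by metis
qed

text \<open>Cell \<open>i\<close> of a parameter line joins the indices \<open>i\<close> and \<open>i + 1\<close>; \<open>far_end i0 i\<close> is
  its end farther from \<open>i0\<close>, and \<open>toward i0 I\<close> is the neighbour of \<open>I\<close> one step closer
  to \<open>i0\<close>.\<close>

definition far_end :: "nat \<Rightarrow> nat \<Rightarrow> nat" where
  "far_end i0 i = (if i < i0 then i else Suc i)"

definition toward :: "nat \<Rightarrow> nat \<Rightarrow> nat" where
  "toward i0 i = (if i0 < i then i - 1 else Suc i)"

lemma far_end_in_range:
  assumes "i < m" and "i0 \<le> m"
  shows "far_end i0 i \<le> m" and "far_end i0 i \<noteq> i0"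
  using assms by (auto simp: far_end_def)

lemma far_end_surj:
  assumes "I \<le> m" and "I \<noteq> i0" and "i0 \<le> m"
  obtains i where "i < m" and "far_end i0 i = I"
proof (cases "I < i0")
  case True
  then show ?thesis
    using assms that[of I] by (simp add: far_end_def)
next
  case False
  then show ?thesis
    using assms that[of "I - 1"] by (simp add: far_end_def)
qed

lemma convex_quad_cell_far_corner:
  fixes H :: "nat \<Rightarrow> nat \<Rightarrow> 'a::euclidean_space"
  assumes "I = far_end i0 i" and "J = far_end j0 j"
  shows "convex_quad (H i j) (H (Suc i) j) (H (Suc i) (Suc j)) (H i (Suc j)) \<longleftrightarrow>
    convex_quad (H (toward i0 I) (toward j0 J)) (H I (toward j0 J)) (H I J) (H (toward i0 I) J)"
  using assms
  by (cases "i < i0"; cases "j < j0")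
    (simp_all add: far_end_def toward_def convex_quad_def insert_commute open_segment_commute Int_commute)

lemma is_net_iff_far_corner_quads:
  fixes H :: "nat \<Rightarrow> nat \<Rightarrow> 'a::euclidean_space"
  assumes "i0 \<le> m" and "j0 \<le> n"
  shows "is_net m n H \<longleftrightarrow> (\<forall>I\<le>m. \<forall>J\<le>n. I \<noteq> i0 \<longrightarrow> J \<noteq> j0 \<longrightarrow>
    convex_quad (H (toward i0 I) (toward j0 J)) (H I (toward j0 J)) (H I J) (H (toward i0 I) J))"
proof (intro iffI allI impI)
  fix I J assume "is_net m n H" "I \<le> m" "J \<le> n" "I \<noteq> i0" "J \<noteq> j0"
  obtain i where "i < m" "far_end i0 i = I"
    using far_end_surj[OF \<open>I \<le> m\<close> \<open>I \<noteq> i0\<close> assms(1)] .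
  obtain j where "j < n" "far_end j0 j = J"
    using far_end_surj[OF \<open>J \<le> n\<close> \<open>J \<noteq> j0\<close> assms(2)] .
  have "convex_quad (H i j) (H (Suc i) j) (H (Suc i) (Suc j)) (H i (Suc j))"
    using \<open>is_net m n H\<close> \<open>i < m\<close> \<open>j < n\<close> by (simp add: is_net_def)
  then show "convex_quad (H (toward i0 I) (toward j0 J)) (H I (toward j0 J)) (H I J) (H (toward i0 I) J)"
    using convex_quad_cell_far_corner[of I i0 i J j0 j H] \<open>far_end i0 i = I\<close> \<open>far_end j0 j = J\<close>
    by simp
next
  assume far: "\<forall>I\<le>m. \<forall>J\<le>n. I \<noteq> i0 \<longrightarrow> J \<noteq> j0 \<longrightarrow>
    convex_quad (H (toward i0 I) (toward j0 J)) (H I (toward j0 J)) (H I J) (H (toward i0 I) J)"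
  show "is_net m n H"
    unfolding is_net_def
  proof (intro allI impI)
    fix i j assume "i < m" "j < n"
    then have "convex_quad (H (toward i0 (far_end i0 i)) (toward j0 (far_end j0 j)))
        (H (far_end i0 i) (toward j0 (far_end j0 j))) (H (far_end i0 i) (far_end j0 j))
        (H (toward i0 (far_end i0 i)) (far_end j0 j))"
      using far far_end_in_range[OF \<open>i < m\<close> assms(1)] far_end_in_range[OF \<open>j < n\<close> assms(2)]
      by simp
    then show "convex_quad (H i j) (H (Suc i) j) (H (Suc i) (Suc j)) (H i (Suc j))"
      using convex_quad_cell_far_corner[of "far_end i0 i" i0 i "far_end j0 j" j0 j H] by simp
  qed
qed

lemma toward_induct[consumes 4, case_names axes step]:
  assumes "i \<le> m" and "j \<le> n" and "i0 \<le> m" and "j0 \<le> n"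
    and axes: "\<And>i j. i \<le> m \<Longrightarrow> j \<le> n \<Longrightarrow> i = i0 \<or> j = j0 \<Longrightarrow> P i j"
    and step: "\<And>i j. i \<le> m \<Longrightarrow> j \<le> n \<Longrightarrow> i \<noteq> i0 \<Longrightarrow> j \<noteq> j0 \<Longrightarrow>
      P (toward i0 i) (toward j0 j) \<Longrightarrow> P i (toward j0 j) \<Longrightarrow> P (toward i0 i) j \<Longrightarrow> P i j"
  shows "P i j"
  using assms(1,2)
proof (induction "(i - i0) + (i0 - i) + (j - j0) + (j0 - j)" arbitrary: i j rule: less_induct)
  case less
  show ?case
  proof (cases "i = i0 \<or> j = j0")
    case True
    then show ?thesis
      using axes less.prems by blast
  next
    case False
    then show ?thesis
      using less.prems assms(3,4)
      by (intro step[of i j] less.hyps) (auto simp: toward_def)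
  qed
qed

definition lift_recurrence ::
    "nat \<Rightarrow> nat \<Rightarrow> nat \<Rightarrow> nat \<Rightarrow> (nat \<Rightarrow> nat \<Rightarrow> point2) \<Rightarrow> (nat \<Rightarrow> nat \<Rightarrow> point3) \<Rightarrow> bool" where
  "lift_recurrence m n i0 j0 G F \<longleftrightarrow> (\<forall>I\<le>m. \<forall>J\<le>n. I \<noteq> i0 \<longrightarrow> J \<noteq> j0 \<longrightarrow>
     F I J = plane_lift {F (toward i0 I) (toward j0 J), F I (toward j0 J), F (toward i0 I) J} (G I J))"

lemma is_net_iff_lift_recurrence:
  fixes F :: "nat \<Rightarrow> nat \<Rightarrow> point3"
  assumes G: "is_net m n G" and "i0 \<le> m" and "j0 \<le> n"
    and top: "\<forall>i\<le>m. \<forall>j\<le>n. top_view (F i j) = G i j"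
  shows "is_net m n F \<longleftrightarrow> lift_recurrence m n i0 j0 G F"
proof -
  have "convex_quad (F (toward i0 I) (toward j0 J)) (F I (toward j0 J)) (F I J) (F (toward i0 I) J)
      \<longleftrightarrow> F I J = plane_lift {F (toward i0 I) (toward j0 J), F I (toward j0 J), F (toward i0 I) J} (G I J)"
    if "I \<le> m" "J \<le> n" "I \<noteq> i0" "J \<noteq> j0" for I J
  proof -
    have "toward i0 I \<le> m" "toward j0 J \<le> n"
      using that assms(2,3) by (auto simp: toward_def)
    moreover have "convex_quad (G (toward i0 I) (toward j0 J)) (G I (toward j0 J)) (G I J) (G (toward i0 I) J)"
      using G that is_net_iff_far_corner_quads[OF assms(2,3)] by blast
    ultimately show ?thesis
      using convex_quad_iff_plane_lift that top by simp
  qed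
  then show ?thesis
    unfolding lift_recurrence_def is_net_iff_far_corner_quads[OF assms(2,3)] by blast
qed

lemma lift_recurrence_unique:
  assumes "i0 \<le> m" and "j0 \<le> n"
    and "lift_recurrence m n i0 j0 G F" and "lift_recurrence m n i0 j0 G F'"
    and "\<forall>i\<le>m. F i j0 = F' i j0" and "\<forall>j\<le>n. F i0 j = F' i0 j"
  shows "\<forall>i\<le>m. \<forall>j\<le>n. F i j = F' i j"
proof (intro allI impI)
  fix i j assume "i \<le> m" "j \<le> n"
  then show "F i j = F' i j"
    using assms(1,2)
  proof (induction rule: toward_induct)
    case (axes i j)
    then show ?case
      using assms(5,6) by blast
  next
    case (step i j)
    then show ?case
      using assms(3,4) unfolding lift_recurrence_def by metis
  qed
qed

function lift_net ::
    "(nat \<Rightarrow> nat \<Rightarrow> point2) \<Rightarrow> (nat \<Rightarrow> point3) \<Rightarrow> (nat \<Rightarrow> point3) \<Rightarrow> nat \<Rightarrow> nat \<Rightarrow> nat \<Rightarrow> nat \<Rightarrow> point3"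
  where
  "lift_net G A B i0 j0 i j =
    (if i = i0 then B j else if j = j0 then A i else
     plane_lift {lift_net G A B i0 j0 (toward i0 i) (toward j0 j), lift_net G A B i0 j0 i (toward j0 j),
       lift_net G A B i0 j0 (toward i0 i) j} (G i j))"
  by pat_completeness auto
termination
  by (relation "Wellfounded.measure (\<lambda>(G, A, B, i0, j0, i, j). (i - i0) + (i0 - i) + (j - j0) + (j0 - j))")
    (auto simp: toward_def)

declare lift_net.simps[simp del]

lemma lift_net_lift_recurrence: "lift_recurrence m n i0 j0 G (lift_net G A B i0 j0)"
  unfolding lift_recurrence_def by (subst lift_net.simps) simp

lemma top_view_lift_net:
  assumes G: "is_net m n G" and "i0 \<le> m" and "j0 \<le> n"
    and "\<forall>i\<le>m. top_view (A i) = G i j0" and "\<forall>j\<le>n. top_view (B j) = G i0 j"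
  shows "\<forall>i\<le>m. \<forall>j\<le>n. top_view (lift_net G A B i0 j0 i j) = G i j"
proof (intro allI impI)
  fix i j assume "i \<le> m" "j \<le> n"
  then show "top_view (lift_net G A B i0 j0 i j) = G i j"
    using assms(2,3)
  proof (induction rule: toward_induct)
    case (axes i j)
    then show ?case
      using assms(4,5) by (subst lift_net.simps) auto
  next
    case (step i j)
    have "convex_quad (G (toward i0 i) (toward j0 j)) (G i (toward j0 j)) (G i j) (G (toward i0 i) j)"
      using G step.hyps is_net_iff_far_corner_quads[OF assms(2,3)] by blast
    then have "\<not> collinear (top_view ` {lift_net G A B i0 j0 (toward i0 i) (toward j0 j),
        lift_net G A B i0 j0 i (toward j0 j), lift_net G A B i0 j0 (toward i0 i) j})"
      using convex_quad_not_collinear step.IH by simp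
    then show ?case
      using step.hyps top_view_plane_lift by (subst lift_net.simps) simp
  qed
qed

theorem lemma10:
  fixes m n i0 j0 :: nat
    and G :: "nat \<Rightarrow> nat \<Rightarrow> point2"
    and A B :: "nat \<Rightarrow> point3"
  assumes "is_net m n G"
    and "i0 \<le> m" and "j0 \<le> n"
    and "A i0 = B j0"
    and "\<forall>i\<le>m. top_view (A i) = G i j0"
    and "\<forall>j\<le>n. top_view (B j) = G i0 j"
  shows "\<exists>F :: nat \<Rightarrow> nat \<Rightarrow> point3.
           is_net m n F \<and> (\<forall>i\<le>m. F i j0 = A i) \<and> (\<forall>j\<le>n. F i0 j = B j)
           \<and> (\<forall>i\<le>m. \<forall>j\<le>n. top_view (F i j) = G i j)
           \<and> (\<forall>F' :: nat \<Rightarrow> nat \<Rightarrow> point3.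
                 is_net m n F' \<and> (\<forall>i\<le>m. F' i j0 = A i) \<and> (\<forall>j\<le>n. F' i0 j = B j)
                 \<and> (\<forall>i\<le>m. \<forall>j\<le>n. top_view (F' i j) = G i j)
                 \<longrightarrow> (\<forall>i\<le>m. \<forall>j\<le>n. F' i j = F i j))"
proof -
  define F where "F = lift_net G A B i0 j0"
  have top: "\<forall>i\<le>m. \<forall>j\<le>n. top_view (F i j) = G i j"
    unfolding F_def using top_view_lift_net assms by blast
  have axes: "\<forall>i\<le>m. F i j0 = A i" "\<forall>j\<le>n. F i0 j = B j"
    unfolding F_def using assms(4) by (auto simp: lift_net.simps)
  have rec: "lift_recurrence m n i0 j0 G F"
    unfolding F_def by (rule lift_net_lift_recurrence)
  have "\<forall>i\<le>m. \<forall>j\<le>n. F' i j = F i j"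
    if "is_net m n F'" "\<forall>i\<le>m. F' i j0 = A i" "\<forall>j\<le>n. F' i0 j = B j"
      "\<forall>i\<le>m. \<forall>j\<le>n. top_view (F' i j) = G i j" for F'
    using lift_recurrence_unique[OF assms(2,3) _ rec] is_net_iff_lift_recurrence[OF assms(1-3)]
      that axes by simp
  moreover have "is_net m n F"
    using is_net_iff_lift_recurrence[OF assms(1-3) top] rec by blast
  ultimately show ?thesis
    using top axes by blast
qed

end
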